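(* Let $l\ge1$ and $n\ge4l+2$. For any equilateral $(2l+1)$-pointed star $S$ inscribed in $P_n$, the number of points of $S$ that are vertices of $P_n$ or midpoints of edges of $P_n$ is either $0$ or $\gcd(n,2l+1)$.
   Context: $P_n$ is the boundary of the regular polygon in $\mathbb{R}^2$ with vertices the $n$-th roots of unity, Euclidean metric $\|x-y\|$. $d_{P_n}(x,y)\in[0,1)$ is the counterclockwise arc length of $P_n$ from $x$ to $y$ divided by the perimeter. The directed Vietoris–Rips graph $\mathrm{VR}_<(P_n;r)$ has vertex set $P_n$ and, for distinct $u,w$ with $\|u-w\|<r$, the edge $u\to w$ if $d_{P_n}(u,w)<d_{P_n}(w,u)$, else $w\to u$; it is cyclic if whenever $u_0\to u_1$, every $w$ strictly counterclockwise-between them has $u_0\to w$ and $w\to u_1$. $r_n=\sup\{r\ge0:\mathrm{VR}_<(P_n;r')\text{ cyclic for all }0<r'<r\}$. For $0<r<r_n$, $g_r(p)$ is the first point $w$ met moving counterclockwise from $p$ with $\|p-w\|=r$, and $g_{r_n}=\lim_{r\to r_n}g_r$. An equilateral $(2l+1)$-pointed star of side $r\in(0,r_n]$ inscribed in $P_n$ is a cyclic sequence $u_0,\dots,u_{2l}$ with $u_{i+1}=g_r(u_i)$ (indices mod $2l+1$) and $\sum_i d_{P_n}(u_i,u_{i+1})=l$. *)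

theory Defs
  imports "HOL-Analysis.Analysis"
begin

text \<open>The plane R^2 is modelled by the complex numbers (norm = Euclidean norm).
  The n-th roots of unity are the vertices of the regular polygon P_n.\<close>

definition vtx :: "nat \<Rightarrow> int \<Rightarrow> complex" where
  "vtx n k = cis (2 * pi * real_of_int k / real n)"

text \<open>Constant-speed (arc length proportional) parametrisation of the boundary P_n,
  counterclockwise, with period 1: on [k/n, (k+1)/n] it runs along the edge from
  vertex k to vertex k+1.\<close>

definition polyP :: "nat \<Rightarrow> real \<Rightarrow> complex" where
  "polyP n t = (let k = \<lfloor>real n * t\<rfloor>; s = real n * t - real_of_int k
                in complex_of_real (1 - s) * vtx n k + complex_of_real s * vtx n (k + 1))"

definition Pn :: "nat \<Rightarrow> complex set" where
  "Pn n = polyP n ` {0..<1}"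

definition param :: "nat \<Rightarrow> complex \<Rightarrow> real" where
  "param n x = (THE t. t \<in> {0..<1} \<and> polyP n t = x)"

text \<open>Counterclockwise arc length from x to y divided by the perimeter.\<close>

definition dP :: "nat \<Rightarrow> complex \<Rightarrow> complex \<Rightarrow> real" where
  "dP n x y = frac (param n y - param n x)"

definition vr_edge :: "nat \<Rightarrow> real \<Rightarrow> complex \<Rightarrow> complex \<Rightarrow> bool" where
  "vr_edge n r u w \<longleftrightarrow> u \<in> Pn n \<and> w \<in> Pn n \<and> u \<noteq> w \<and> norm (u - w) < r
      \<and> dP n u w \<le> dP n w u"

definition ccw_between :: "nat \<Rightarrow> complex \<Rightarrow> complex \<Rightarrow> complex \<Rightarrow> bool" where
  "ccw_between n a w b \<longleftrightarrow> w \<in> Pn n \<and> w \<noteq> a \<and> w \<noteq> b \<and> dP n a w < dP n a b"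

definition vr_cyclic :: "nat \<Rightarrow> real \<Rightarrow> bool" where
  "vr_cyclic n r \<longleftrightarrow> (\<forall>u0 u1. vr_edge n r u0 u1 \<longrightarrow>
      (\<forall>w. ccw_between n u0 w u1 \<longrightarrow> vr_edge n r u0 w \<and> vr_edge n r w u1))"

definition rn :: "nat \<Rightarrow> real" where
  "rn n = Sup {r. r \<ge> 0 \<and> (\<forall>r'. 0 < r' \<and> r' < r \<longrightarrow> vr_cyclic n r')}"

text \<open>g_r(p): first point met moving counterclockwise from p at distance r from p.\<close>

definition g_r :: "nat \<Rightarrow> real \<Rightarrow> complex \<Rightarrow> complex" where
  "g_r n r p = polyP n (param n p +
      Inf {t. 0 < t \<and> t < 1 \<and> norm (p - polyP n (param n p + t)) = r})"

definition g :: "nat \<Rightarrow> real \<Rightarrow> complex \<Rightarrow> complex" where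
  "g n r p = (if r < rn n then g_r n r p else Lim (at_left (rn n)) (\<lambda>r'. g_r n r' p))"

definition equilateral_star :: "nat \<Rightarrow> nat \<Rightarrow> real \<Rightarrow> (nat \<Rightarrow> complex) \<Rightarrow> bool" where
  "equilateral_star n l r u \<longleftrightarrow> 0 < r \<and> r \<le> rn n
      \<and> (\<forall>i < 2*l+1. u i \<in> Pn n)
      \<and> (\<forall>i < 2*l+1. u ((i + 1) mod (2*l+1)) = g n r (u i))
      \<and> (\<Sum>i < 2*l+1. dP n (u i) (u ((i + 1) mod (2*l+1)))) = real l"

definition vertices :: "nat \<Rightarrow> complex set" where
  "vertices n = {vtx n k | k. True}"

definition midpoints :: "nat \<Rightarrow> complex set" where
  "midpoints n = {(vtx n k + vtx n (k + 1)) / 2 | k. True}"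

end

theory Submission
  imports Defs
begin

text \<open>Parametrise \<open>P_n\<close> by normalised arc length, \<open>t \<mapsto> polyP n t\<close> (period 1), and lift \<open>g\<close>
  to the increasing map \<open>F s = s + g_gap n r s\<close> of the real line. Cyclicity of the Vietoris-Rips
  graph below \<open>r_n\<close> makes a chord dominate every chord nested in it (up to half the perimeter);
  hence \<open>F\<close> commutes with the rotations of \<open>P_n\<close> and each reflection of \<open>P_n\<close> conjugates \<open>F\<close> to
  its inverse. A star is an orbit \<open>s, F s, ..., F^q s = s + l\<close> with \<open>q = 2l + 1\<close>, and its
  vertices and edge midpoints are the orbit points in \<open>(1/2n) \<int>\<close>. If \<open>y\<close> is one of them, reflecting
  in \<open>y\<close> shows \<open>q (x - y) \<in> \<int>\<close> for any other one \<open>x\<close>, so \<open>x - y \<in> (1/d) \<int>\<close> with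
  \<open>d = gcd n q\<close>; conversely, as \<open>gcd l q = 1\<close>, some power of \<open>F\<close> translates \<open>y\<close> by \<open>1/d\<close> modulo
  \<open>\<int>\<close>. So these points form a whole coset of \<open>(1/d) \<int> / \<int>\<close>, or there are none.\<close>

section \<open>Arc-length parametrisation of \<open>P_n\<close>\<close>

lemma vtx_add: "vtx n (k + j) = cis (2 * pi * real_of_int j / real n) * vtx n k"
  unfolding vtx_def by (simp add: cis_mult add_divide_distrib distrib_left algebra_simps)

lemma vtx_Suc_neq:
  assumes "n \<ge> 3"
  shows "vtx n (k + 1) \<noteq> vtx n k"
proof
  assume "vtx n (k + 1) = vtx n k"
  then have "cis (2 * pi / real n) * vtx n k = 1 * vtx n k" using vtx_add[of n k 1] by simp
  moreover have "vtx n k \<noteq> 0" unfolding vtx_def by simp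
  ultimately have "cis (2 * pi / real n) = 1" by (metis mult_cancel_right)
  then have "sin (2 * pi / real n) = 0" by (metis cis.sel(2) one_complex.sel(2))
  moreover have "0 < 2 * pi / real n" "2 * pi / real n < pi" using assms by (auto simp: field_simps)
  ultimately show False using sin_gt_zero by fastforce
qed

lemma polyP_rotate:
  assumes "n > 0"
  shows "polyP n (t + real_of_int j / real n) = cis (2 * pi * real_of_int j / real n) * polyP n t"
proof -
  define k where "k = \<lfloor>real n * t\<rfloor>"
  define s where "s = real n * t - real_of_int k"
  have e: "real n * (t + real_of_int j / real n) = real n * t + real_of_int j"
    using assms by (simp add: field_simps)
  have f: "\<lfloor>real n * t + real_of_int j\<rfloor> = k + j" unfolding k_def by simp
  have s': "real n * t + real_of_int j - real_of_int (k + j) = s" unfolding s_def by simp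
  have v: "vtx n (k + j + 1) = cis (2 * pi * real_of_int j / real n) * vtx n (k + 1)"
    using vtx_add[of n "k + 1" j] by (simp add: ac_simps)
  show ?thesis
    unfolding polyP_def Let_def e f k_def[symmetric] s_def[symmetric] s' v vtx_add
    by (simp add: algebra_simps)
qed

lemma polyP_add_of_int:
  assumes "n > 0"
  shows "polyP n (t + real_of_int m) = polyP n t"
proof -
  have "real_of_int m = real_of_int (m * int n) / real n" using assms by simp
  then have "polyP n (t + real_of_int m)
      = cis (2 * pi * real_of_int (m * int n) / real n) * polyP n t"
    using polyP_rotate[OF assms, of t "m * int n"] by simp
  also have "2 * pi * real_of_int (m * int n) / real n = 2 * pi * real_of_int m" using assms by simp
  finally show ?thesis by simp
qed

lemma polyP_eq_if_diff_Ints: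
  assumes "n > 0" "a - b \<in> \<int>"
  shows "polyP n a = polyP n b"
proof -
  obtain m where "a - b = real_of_int m" using assms(2) by (elim Ints_cases)
  then have "a = b + real_of_int m" by simp
  then show ?thesis using polyP_add_of_int[OF assms(1)] by simp
qed

lemma polyP_uminus:
  assumes "n > 0"
  shows "polyP n (- t) = cnj (polyP n t)"
proof (cases "real n * t \<in> \<int>")
  case True
  then obtain k where k: "real n * t = real_of_int k" by (metis Ints_cases)
  have k': "real n * - t = real_of_int (- k)" using k by simp
  show ?thesis unfolding polyP_def Let_def k k' by (simp add: vtx_def cis_cnj)
next
  case False
  define k where "k = \<lfloor>real n * t\<rfloor>"
  have "real n * t \<noteq> real_of_int k" using False by (metis Ints_of_int)
  then have fl: "\<lfloor>real n * - t\<rfloor> = - k - 1"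
    unfolding k_def by (intro floor_unique) linarith+
  have m: "- 1 - k = - k - 1" by simp
  have c: "cnj (vtx n j) = vtx n (- j)" for j by (simp add: vtx_def cis_cnj)
  show ?thesis
    unfolding polyP_def Let_def fl k_def[symmetric] by (simp add: c algebra_simps m)
qed

lemma polyP_on_edge:
  assumes "n > 0" "real_of_int k / real n \<le> t" "t \<le> real_of_int (k + 1) / real n"
  shows "polyP n t
    = vtx n k + complex_of_real (real n * t - real_of_int k) * (vtx n (k + 1) - vtx n k)"
proof (cases "t = real_of_int (k + 1) / real n")
  case True
  then have "real n * t = real_of_int (k + 1)" using assms(1) by simp
  then show ?thesis unfolding polyP_def Let_def by simp
next
  case False
  then have "\<lfloor>real n * t\<rfloor> = k"
    using assms by (intro floor_unique) (auto simp: field_simps)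
  then show ?thesis unfolding polyP_def Let_def by (simp add: algebra_simps)
qed

lemma continuous_polyP:
  assumes "n > 0"
  shows "continuous_on UNIV (polyP n)"
proof (rule continuous_at_imp_continuous_on, intro ballI)
  fix t :: real
  define k where "k = \<lfloor>real n * t\<rfloor>"
  define I where "I j = {real_of_int j / real n .. real_of_int (j + 1) / real n}" for j
  have on_edge: "continuous_on (I j) (polyP n)" for j
  proof -
    have "continuous_on (I j) (\<lambda>t. vtx n j + complex_of_real (real n * t - real_of_int j)
        * (vtx n (j + 1) - vtx n j))"
      by (intro continuous_intros)
    then show ?thesis by (rule continuous_on_eq) (use polyP_on_edge[OF assms] in \<open>auto simp: I_def\<close>)
  qed
  have "I (k - 1) \<union> I k = {real_of_int (k - 1) / real n .. real_of_int (k + 1) / real n}"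
    using assms by (auto simp: I_def field_simps)
  then have "continuous_on {real_of_int (k - 1) / real n .. real_of_int (k + 1) / real n} (polyP n)"
    using continuous_on_closed_Un[OF _ _ on_edge on_edge] by (metis closed_atLeastAtMost I_def)
  moreover have "real_of_int k \<le> real n * t" "real n * t < real_of_int k + 1"
    unfolding k_def by linarith+
  then have "t \<in> interior {real_of_int (k - 1) / real n .. real_of_int (k + 1) / real n}"
    using assms by (auto simp: field_simps)
  ultimately show "isCont (polyP n) t" using continuous_on_interior by blast
qed

lemma polyP_vtx: "n > 0 \<Longrightarrow> polyP n (real_of_int k / real n) = vtx n k"
  unfolding polyP_def Let_def by simp

lemma polyP_midpoint:
  assumes "n > 0"
  shows "polyP n ((real_of_int k + 1 / 2) / real n) = (vtx n k + vtx n (k + 1)) / 2"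
proof -
  have e: "real n * ((real_of_int k + 1 / 2) / real n) = real_of_int k + 1 / 2" using assms by simp
  have f: "\<lfloor>real_of_int k + 1 / 2 :: real\<rfloor> = k" by linarith
  show ?thesis unfolding polyP_def Let_def e f by (simp add: field_simps)
qed

lemma cos_odd_multiple_le:
  assumes "n > 0" "1 \<le> m" "m \<le> 2 * int n - 1"
  shows "cos (real_of_int m * pi / real n) \<le> cos (pi / real n)"
    and "3 \<le> m \<Longrightarrow> m \<le> 2 * int n - 3 \<Longrightarrow> cos (real_of_int m * pi / real n) < cos (pi / real n)"
proof -
  have sym: "cos (real_of_int m * pi / real n) = cos (real_of_int (2 * int n - m) * pi / real n)"
  proof -
    have "real_of_int (2 * int n - m) * pi / real n = 2 * pi - real_of_int m * pi / real n"
      using assms(1) by (simp add: field_simps)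
    then show ?thesis by (simp add: cos_diff)
  qed
  have mono: "cos (real_of_int m' * pi / real n) \<le> cos (pi / real n)"
    "3 \<le> m' \<Longrightarrow> cos (real_of_int m' * pi / real n) < cos (pi / real n)"
    if "1 \<le> m'" "m' \<le> int n" for m'
  proof -
    have "real_of_int m' * pi / real n \<le> pi" "pi / real n \<le> real_of_int m' * pi / real n"
      using that assms(1) by (auto simp: field_simps)
    then show "cos (real_of_int m' * pi / real n) \<le> cos (pi / real n)"
      by (intro cos_monotone_0_pi_le) (use assms(1) in auto)
    assume "3 \<le> m'"
    then have "pi / real n < real_of_int m' * pi / real n"
      using assms(1) by (simp add: field_simps)
    with \<open>real_of_int m' * pi / real n \<le> pi\<close>
    show "cos (real_of_int m' * pi / real n) < cos (pi / real n)"
      by (intro cos_monotone_0_pi) (use assms(1) in auto)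
  qed
  show "cos (real_of_int m * pi / real n) \<le> cos (pi / real n)"
  proof (cases "m \<le> int n")
    case False
    then show ?thesis unfolding sym using mono(1)[of "2 * int n - m"] assms by simp
  qed (use mono(1)[of m] assms in simp)
  show "cos (real_of_int m * pi / real n) < cos (pi / real n)" if "3 \<le> m" "m \<le> 2 * int n - 3"
  proof (cases "m \<le> int n")
    case False
    then show ?thesis unfolding sym using mono(2)[of "2 * int n - m"] that by simp
  qed (use mono(2)[of m] that in simp)
qed

text \<open>Height in the direction of the midpoint of the edge \<open>[vtx n 0, vtx n 1]\<close>; on \<open>P_n\<close> it is
  maximal exactly along that edge, which yields injectivity of \<open>polyP n\<close> modulo 1.\<close>

definition edge0_height :: "nat \<Rightarrow> complex \<Rightarrow> real" where
  "edge0_height n z = Re (z * cnj (cis (pi / real n)))"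

lemma edge0_height_vtx: "edge0_height n (vtx n j) = cos (real_of_int (2 * j - 1) * pi / real n)"
proof -
  have "2 * pi * real_of_int j / real n + - (pi / real n) = real_of_int (2 * j - 1) * pi / real n"
    by (simp add: diff_divide_distrib algebra_simps)
  then show ?thesis unfolding edge0_height_def vtx_def cis_cnj cis_mult by simp
qed

lemma edge0_height_affine:
  "edge0_height n (v + complex_of_real s * (w - v))
    = (1 - s) * edge0_height n v + s * edge0_height n w"
  unfolding edge0_height_def by (simp add: algebra_simps)

lemma edge0_height_polyP_lt:
  assumes n: "n \<ge> 4" and b: "1 / real n < b" "b < 1"
  shows "edge0_height n (polyP n b) < cos (pi / real n)"
proof -
  have n0: "n > 0" using n by simp
  define j where "j = \<lfloor>real n * b\<rfloor>"
  define s where "s = real n * b - real_of_int j"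
  have s: "0 \<le> s" "s < 1" unfolding s_def j_def by linarith+
  have "1 < real n * b" "real n * b < real n" using b n0 by (auto simp: field_simps)
  then have j: "1 \<le> j" "j \<le> int n - 1" "j = 1 \<Longrightarrow> 0 < s" unfolding s_def j_def by linarith+
  have "polyP n b = vtx n j + complex_of_real s * (vtx n (j + 1) - vtx n j)"
    unfolding polyP_def Let_def j_def[symmetric] s_def[symmetric] by (simp add: algebra_simps)
  then have h: "edge0_height n (polyP n b) = (1 - s) * cos (real_of_int (2 * j - 1) * pi / real n)
      + s * cos (real_of_int (2 * (j + 1) - 1) * pi / real n)"
    by (simp only: edge0_height_affine edge0_height_vtx)
  define c where "c = cos (pi / real n)"
  have le1: "cos (real_of_int (2 * j - 1) * pi / real n) \<le> c"
    unfolding c_def by (rule cos_odd_multiple_le(1)) (use j n0 in auto)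
  have le2: "cos (real_of_int (2 * (j + 1) - 1) * pi / real n) \<le> c"
    unfolding c_def by (rule cos_odd_multiple_le(1)) (use j n0 in auto)
  show ?thesis
  proof (cases "j = 1")
    case True
    have "cos (real_of_int (2 * (j + 1) - 1) * pi / real n) < c"
      unfolding c_def True using n by (intro cos_odd_multiple_le(2)) auto
    then have "s * cos (real_of_int (2 * (j + 1) - 1) * pi / real n) < s * c"
      using j(3) True by simp
    moreover have "(1 - s) * cos (real_of_int (2 * j - 1) * pi / real n) \<le> (1 - s) * c"
      using le1 s by (intro mult_left_mono) auto
    ultimately show ?thesis unfolding h c_def by (simp add: algebra_simps)
  next
    case False
    have "cos (real_of_int (2 * j - 1) * pi / real n) < c"
      unfolding c_def using False j n by (intro cos_odd_multiple_le(2)) auto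
    then have "(1 - s) * cos (real_of_int (2 * j - 1) * pi / real n) < (1 - s) * c" using s by simp
    moreover have "s * cos (real_of_int (2 * (j + 1) - 1) * pi / real n) \<le> s * c"
      using le2 s by (intro mult_left_mono) auto
    ultimately show ?thesis unfolding h c_def by (simp add: algebra_simps)
  qed
qed

lemma polyP_first_edge:
  assumes "n > 0" "0 \<le> t" "t \<le> 1 / real n"
  shows "polyP n t = vtx n 0 + complex_of_real (real n * t) * (vtx n 1 - vtx n 0)"
  using polyP_on_edge[of n 0 t] assms by simp

lemma polyP_inj_first_edge:
  assumes n: "n \<ge> 4" and a: "0 \<le> a" "a < 1 / real n" and b: "0 \<le> b" "b < 1"
    and eq: "polyP n a = polyP n b"
  shows "a = b"
proof (cases "b \<le> 1 / real n")
  case True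
  have "vtx n 1 \<noteq> vtx n 0" using vtx_Suc_neq[of n 0] n by simp
  then have "real n * a = real n * b"
    using eq polyP_first_edge[of n a] polyP_first_edge[of n b] a b True n by simp
  then show ?thesis using n by simp
next
  case False
  have "edge0_height n (polyP n a) = (1 - real n * a) * cos (real_of_int (2 * 0 - 1) * pi / real n)
      + real n * a * cos (real_of_int (2 * 1 - 1) * pi / real n)"
    using polyP_first_edge[of n a] a n by (simp only: edge0_height_affine edge0_height_vtx)
  then have "edge0_height n (polyP n a) = cos (pi / real n)" by (simp add: algebra_simps)
  then show ?thesis using edge0_height_polyP_lt[OF n _ b(2)] False eq by simp
qed

lemma polyP_eq_iff:
  assumes n: "n \<ge> 4"
  shows "polyP n a = polyP n b \<longleftrightarrow> a - b \<in> \<int>"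
proof
  have n0: "n > 0" using n by simp
  assume eq: "polyP n a = polyP n b"
  define k where "k = \<lfloor>real n * a\<rfloor>"
  define a' where "a' = a + real_of_int (- k) / real n"
  define b' where "b' = frac (b + real_of_int (- k) / real n)"
  have "real_of_int k \<le> real n * a" "real n * a < real_of_int k + 1" unfolding k_def by linarith+
  moreover have "real n * a' = real n * a - real_of_int k"
    unfolding a'_def using n0 by (simp add: field_simps)
  ultimately have "0 \<le> real n * a'" "real n * a' < 1" by linarith+
  then have a': "0 \<le> a'" "a' < 1 / real n" using n0 by (auto simp: field_simps zero_le_mult_iff)
  have b': "0 \<le> b'" "b' < 1" unfolding b'_def by (auto simp: frac_lt_1)
  have "polyP n b' = polyP n (b + real_of_int (- k) / real n)"
    unfolding b'_def frac_def using polyP_add_of_int[OF n0]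
    by (metis diff_conv_add_uminus of_int_minus)
  then have "polyP n a' = polyP n b'" unfolding a'_def polyP_rotate[OF n0] eq by simp
  then have "a' = b'" using polyP_inj_first_edge[OF n a' b'] by simp
  then have "a - b = - real_of_int \<lfloor>b + real_of_int (- k) / real n\<rfloor>"
    unfolding a'_def b'_def frac_def by simp
  then show "a - b \<in> \<int>" by simp
qed (use polyP_eq_if_diff_Ints n in simp)

lemma param_polyP:
  assumes "n \<ge> 4"
  shows "param n (polyP n t) = frac t"
  unfolding param_def
proof (rule the_equality)
  have "polyP n (frac t) = polyP n t"
    using assms polyP_eq_if_diff_Ints[of n "frac t" t] by (simp add: frac_def)
  then show "frac t \<in> {0..<1} \<and> polyP n (frac t) = polyP n t" by (simp add: frac_lt_1)
next
  fix x assume x: "x \<in> {0..<1} \<and> polyP n x = polyP n t"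
  then have "frac (t + (x - t)) = frac t" using polyP_eq_iff[OF assms] frac_add_int_right by blast
  then show "x = frac t" using x by simp
qed

lemma Pn_eq_range: "n > 0 \<Longrightarrow> Pn n = range (polyP n)"
  unfolding Pn_def
proof safe
  fix t assume "n > 0"
  show "polyP n t \<in> polyP n ` {0..<1}"
  proof
    show "polyP n t = polyP n (frac t)" using polyP_eq_if_diff_Ints[of n t "frac t"] \<open>n > 0\<close>
      by (simp add: frac_def)
  qed (simp add: frac_lt_1)
qed auto

lemma dP_polyP:
  assumes "n \<ge> 4"
  shows "dP n (polyP n a) (polyP n b) = frac (b - a)"
proof -
  have "frac b - frac a = (b - a) + real_of_int (\<lfloor>a\<rfloor> - \<lfloor>b\<rfloor>)" unfolding frac_def by simp
  then show ?thesis unfolding dP_def param_polyP[OF assms] by (simp only: frac_add_of_int_right)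
qed

lemma polyP_in_vertices_midpoints_iff:
  assumes n: "n \<ge> 4"
  shows "polyP n t \<in> vertices n \<union> midpoints n \<longleftrightarrow> real (2 * n) * t \<in> \<int>"
proof
  have n0: "n > 0" using n by simp
  assume "polyP n t \<in> vertices n \<union> midpoints n"
  then consider k where "polyP n t = vtx n k" | k where "polyP n t = (vtx n k + vtx n (k + 1)) / 2"
    unfolding vertices_def midpoints_def by blast
  then show "real (2 * n) * t \<in> \<int>"
  proof cases
    case (1 k)
    then have "polyP n t = polyP n (real_of_int k / real n)" using polyP_vtx[OF n0] by simp
    then have "t - real_of_int k / real n \<in> \<int>" using polyP_eq_iff[OF n] by blast
    then obtain m where "t - real_of_int k / real n = real_of_int m" by (metis Ints_cases)
    then have "real (2 * n) * t = real_of_int (2 * k + 2 * int n * m)"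
      using n0 by (simp add: field_simps)
    then show ?thesis by simp
  next
    case (2 k)
    then have "polyP n t = polyP n ((real_of_int k + 1 / 2) / real n)"
      by (subst polyP_midpoint[OF n0])
    then have "t - (real_of_int k + 1 / 2) / real n \<in> \<int>" using polyP_eq_iff[OF n] by blast
    then obtain m where "t - (real_of_int k + 1 / 2) / real n = real_of_int m" by (metis Ints_cases)
    then have "real (2 * n) * t = real_of_int (2 * k + 1 + 2 * int n * m)"
      using n0 by (simp add: field_simps)
    then show ?thesis by simp
  qed
next
  have n0: "n > 0" using n by simp
  assume "real (2 * n) * t \<in> \<int>"
  then obtain j where j: "real (2 * n) * t = real_of_int j" by (metis Ints_cases)
  show "polyP n t \<in> vertices n \<union> midpoints n"
  proof (cases "even j")
    case True
    then obtain k where "j = 2 * k" by auto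
    then have "t = real_of_int k / real n" using j n0 by (simp add: field_simps)
    then show ?thesis using polyP_vtx[OF n0] unfolding vertices_def by auto
  next
    case False
    then obtain k where "j = 2 * k + 1" by (metis oddE)
    then have "t = (real_of_int k + 1 / 2) / real n" using j n0 by (simp add: field_simps)
    then show ?thesis using polyP_midpoint[OF n0] unfolding midpoints_def by auto
  qed
qed

lemma not_Ints_between:
  assumes "real_of_int k < x" "x < real_of_int k + 1"
  shows "x \<notin> \<int>"
proof
  assume "x \<in> \<int>"
  then obtain m where "x = real_of_int m" by (elim Ints_cases)
  with assms have "k < m" "m < k + 1" by linarith+
  then show False by simp
qed

lemma diff_in_Ints_trans: "a - b \<in> \<int> \<Longrightarrow> b - c \<in> \<int> \<Longrightarrow> (a :: real) - c \<in> \<int>"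
  using Ints_add[of "a - b" "b - c"] by simp

lemma diff_in_Ints_commute: "a - b \<in> \<int> \<Longrightarrow> (b :: real) - a \<in> \<int>"
  using Ints_minus[of "a - b"] by simp

section \<open>Chords and cyclicity\<close>

definition chord :: "nat \<Rightarrow> real \<Rightarrow> real \<Rightarrow> real" where
  "chord n a b = cmod (polyP n a - polyP n b)"

lemma chord_commute: "chord n a b = chord n b a"
  unfolding chord_def by (simp add: norm_minus_commute)

lemma chord_nonneg: "0 \<le> chord n a b"
  unfolding chord_def by simp

lemma chord_self [simp]: "chord n a a = 0"
  unfolding chord_def by simp

lemma chord_rotate:
  assumes "n > 0"
  shows "chord n (a + real_of_int j / real n) (b + real_of_int j / real n) = chord n a b"
  unfolding chord_def polyP_rotate[OF assms] by (simp flip: right_diff_distrib add: norm_mult)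

lemma chord_add_of_int:
  assumes "n > 0"
  shows "chord n a (b + real_of_int m) = chord n a b"
  unfolding chord_def polyP_add_of_int[OF assms] ..

lemma chord_reflect:
  assumes "n > 0"
  shows "chord n (real_of_int j / real n - a) (real_of_int j / real n - b) = chord n a b"
proof -
  have "chord n (- a) (- b) = chord n a b"
    unfolding chord_def polyP_uminus[OF assms] by (metis complex_cnj_diff complex_mod_cnj)
  then show ?thesis using chord_rotate[OF assms, of "- a" j "- b"] by simp
qed

lemma continuous_on_chord [continuous_intros]:
  assumes "n > 0" "continuous_on S f" "continuous_on S f'"
  shows "continuous_on S (\<lambda>t. chord n (f t) (f' t))"
proof -
  have "continuous_on S (\<lambda>t. polyP n (f t))" "continuous_on S (\<lambda>t. polyP n (f' t))"
    using continuous_on_compose2[OF continuous_polyP[OF assms(1)]] assms(2,3) by auto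
  then show ?thesis unfolding chord_def by (intro continuous_intros)
qed

text \<open>Along an edge \<open>polyP n\<close> is affine and injective, so by the parallelogram law the
  squared distance to any fixed point is strictly midpoint convex there.\<close>

lemma dist_sq_strict_midpoint_convex_on_edge:
  assumes n: "n \<ge> 3" and h: "h > 0" and k: "real_of_int k / real n \<le> x - h"
    "x + h \<le> real_of_int (k + 1) / real n"
  shows "2 * (cmod (polyP n x - z))\<^sup>2
    < (cmod (polyP n (x - h) - z))\<^sup>2 + (cmod (polyP n (x + h) - z))\<^sup>2"
proof -
  have n0: "n > 0" using n by simp
  define D where "D = vtx n (k + 1) - vtx n k"
  define Y where "Y = complex_of_real (real n * h) * D"
  have x: "polyP n x = vtx n k + complex_of_real (real n * x - real_of_int k) * D"
    unfolding D_def using h k by (intro polyP_on_edge[OF n0]) auto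
  have "polyP n (x - h) = vtx n k + complex_of_real (real n * (x - h) - real_of_int k) * D"
    unfolding D_def using h k by (intro polyP_on_edge[OF n0]) auto
  then have minus: "polyP n (x - h) = polyP n x - Y" unfolding x Y_def by (simp add: algebra_simps)
  have "polyP n (x + h) = vtx n k + complex_of_real (real n * (x + h) - real_of_int k) * D"
    unfolding D_def using h k by (intro polyP_on_edge[OF n0]) auto
  then have plus: "polyP n (x + h) = polyP n x + Y" unfolding x Y_def by (simp add: algebra_simps)
  have "D \<noteq> 0" unfolding D_def using vtx_Suc_neq[OF n] by simp
  then have "cmod Y > 0" unfolding Y_def using n0 h by simp
  have "(cmod (A - Y))\<^sup>2 + (cmod (A + Y))\<^sup>2 = 2 * (cmod A)\<^sup>2 + 2 * (cmod Y)\<^sup>2" for A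
    by (simp only: cmod_power2) (simp add: algebra_simps power2_eq_square)
  from this[of "polyP n x - z"] \<open>cmod Y > 0\<close> show ?thesis
    unfolding minus plus by (simp add: algebra_simps)
qed

lemma exists_subinterval_on_edge:
  assumes "n > 0" "a < b"
  obtains h x k where "h > 0" "a \<le> x - h" "x + h \<le> b" "real_of_int k / real n \<le> x - h"
    "x + h \<le> real_of_int (k + 1) / real n"
proof -
  define k where "k = \<lfloor>real n * a\<rfloor>"
  have k: "real_of_int k / real n \<le> a" "a < real_of_int (k + 1) / real n"
    unfolding k_def using assms(1) by (auto simp: field_simps) linarith+
  define c where "c = min b (real_of_int (k + 1) / real n)"
  have "a < c" and c: "c \<le> b" "c \<le> real_of_int (k + 1) / real n"
    unfolding c_def using assms(2) k by auto
  show ?thesis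
    by (rule that[of "(c - a) / 2" "(a + c) / 2" k]) (use \<open>a < c\<close> c k in \<open>auto simp: field_simps\<close>)
qed

lemma exists_centered_subinterval_on_edge:
  assumes "n > 0" "real n * b \<notin> \<int>"
  obtains h k where "0 < h" "h \<le> 1 / 4" "real_of_int k / real n \<le> b - h"
    "b + h \<le> real_of_int (k + 1) / real n"
proof -
  define k where "k = \<lfloor>real n * b\<rfloor>"
  have "real n * b \<noteq> real_of_int k" using assms(2) by (metis Ints_of_int)
  then have kb: "real_of_int k < real n * b" "real n * b < real_of_int k + 1"
    unfolding k_def by linarith+
  define h
    where "h = min (min (b - real_of_int k / real n) (real_of_int (k + 1) / real n - b)) (1 / 4)"
  have "0 < h" unfolding h_def using kb assms(1) by (auto simp: field_simps)
  moreover have "h \<le> 1 / 4" "h \<le> b - real_of_int k / real n" "h \<le> real_of_int (k + 1) / real n - b"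
    unfolding h_def by (meson min.cobounded1 min.cobounded2 order_trans)+
  ultimately show ?thesis by (intro that[of h k]) linarith+
qed

lemma dist_polyP_not_constant:
  assumes n: "n \<ge> 3" and ab: "a < b"
  shows "\<exists>x. a \<le> x \<and> x \<le> b \<and> cmod (polyP n x - z) \<noteq> c"
proof (rule ccontr)
  assume "\<not> ?thesis"
  moreover obtain h x k where "h > 0" "a \<le> x - h" "x + h \<le> b" "real_of_int k / real n \<le> x - h"
    "x + h \<le> real_of_int (k + 1) / real n"
    using exists_subinterval_on_edge[OF _ ab, of n] n by auto
  ultimately show False using dist_sq_strict_midpoint_convex_on_edge[OF n, of h k x z] by auto
qed

text \<open>The part of cyclicity of \<open>VR_<(P_n; r)\<close> that is used, phrased on parameters.\<close>

definition chord_cyclic :: "nat \<Rightarrow> real \<Rightarrow> bool" where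
  "chord_cyclic n r \<longleftrightarrow> (\<forall>a b c. a < c \<longrightarrow> c < b \<longrightarrow> b \<le> a + 1 / 2 \<longrightarrow> chord n a b < r
      \<longrightarrow> chord n a c < r \<and> chord n c b < r)"

lemma chord_cyclicD:
  assumes "chord_cyclic n r" "a < c" "c < b" "b \<le> a + 1 / 2" "chord n a b < r"
  shows "chord n a c < r" "chord n c b < r"
  using assms unfolding chord_cyclic_def by blast+

lemma vr_cyclic_imp_chord_cyclic:
  assumes n: "n \<ge> 4" and cyc: "vr_cyclic n r"
  shows "chord_cyclic n r"
  unfolding chord_cyclic_def
proof (intro allI impI)
  fix a b c assume ac: "a < c" "c < b" and b: "b \<le> a + 1 / 2" and ab: "chord n a b < r"
  have n0: "n > 0" using n by simp
  have inP: "polyP n x \<in> Pn n" for x using Pn_eq_range[OF n0] by simp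
  have dP: "dP n (polyP n x) (polyP n y) = y - x" if "x \<le> y" "y < x + 1" for x y
    using dP_polyP[OF n] that by simp
  have neq: "polyP n x \<noteq> polyP n y" if "x < y" "y < x + 1" for x y
    using polyP_eq_iff[OF n, of y x] not_Ints_between[of 0 "y - x"] that by simp
  have "b - a \<notin> \<int>" using not_Ints_between[of 0 "b - a"] ac b by simp
  then have "frac (- (b - a)) = 1 - (b - a)" unfolding frac_neg using ac b by (simp add: frac_eq)
  then have "dP n (polyP n b) (polyP n a) = 1 - (b - a)" using dP_polyP[OF n, of b a] by simp
  then have "vr_edge n r (polyP n a) (polyP n b)"
    unfolding vr_edge_def using inP neq[of a b] dP[of a b] ab ac b by (simp add: chord_def)
  moreover have "ccw_between n (polyP n a) (polyP n c) (polyP n b)"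
    unfolding ccw_between_def using inP neq[of a c] neq[of c b] dP[of a c] dP[of a b] ac b by auto
  ultimately have "vr_edge n r (polyP n a) (polyP n c) \<and> vr_edge n r (polyP n c) (polyP n b)"
    using cyc unfolding vr_cyclic_def by blast
  then show "chord n a c < r \<and> chord n c b < r" unfolding vr_edge_def chord_def by auto
qed

text \<open>Cyclicity up to a radius above the antipodal chord from \<open>s\<close> would make \<open>s + 1/2\<close> a
  maximum of the distance to \<open>polyP n s\<close>; inside an edge this contradicts strict convexity.\<close>

lemma antipodal_chord_ge_cyclic_bound:
  assumes n: "n \<ge> 4" and cyc: "\<And>r. 0 < r \<Longrightarrow> r < R \<Longrightarrow> chord_cyclic n r"
    and s: "real n * (s + 1 / 2) \<notin> \<int>"
  shows "R \<le> chord n s (s + 1 / 2)"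
proof (rule ccontr)
  have n0: "n > 0" using n by simp
  define b where "b = s + 1 / 2"
  define l where "l = chord n s b"
  assume "\<not> ?thesis"
  then have lR: "l < R" unfolding l_def b_def by simp
  have cyc': "chord_cyclic n r" if "l < r" "r < R" for r
    using cyc that chord_nonneg[of n s b] unfolding l_def by simp
  have below: "chord n s c \<le> l" if c: "s < c" "c < s + 1" for c
  proof (rule dense_ge_bounded[OF lR])
    fix r assume r: "l < r" "r < R"
    show "chord n s c \<le> r"
    proof (cases c b rule: linorder_cases)
      case less
      then show ?thesis
        using chord_cyclicD(1)[OF cyc'[OF r] c(1) less] r unfolding l_def b_def by simp
    next
      case equal
      then show ?thesis using r unfolding l_def by simp
    next
      case greater
      have "chord n b (s + 1) = l"
        unfolding l_def using chord_add_of_int[OF n0, of b s 1] chord_commute[of n b s] by simp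
      then have "chord n c (s + 1) < r"
        using chord_cyclicD(2)[OF cyc'[OF r] greater c(2)] r unfolding b_def by simp
      then show ?thesis using chord_add_of_int[OF n0, of c s 1] chord_commute[of n c s] by simp
    qed
  qed
  obtain h k where h: "0 < h" "h \<le> 1 / 4" "real_of_int k / real n \<le> b - h"
    "b + h \<le> real_of_int (k + 1) / real n"
    using exists_centered_subinterval_on_edge[OF n0] s unfolding b_def by blast
  have "2 * (chord n s b)\<^sup>2 < (chord n s (b - h))\<^sup>2 + (chord n s (b + h))\<^sup>2"
    using dist_sq_strict_midpoint_convex_on_edge[OF _ h(1,3,4), of "polyP n s"] n
    unfolding chord_def by (simp add: norm_minus_commute)
  moreover have "chord n s (b - h) \<le> l" "chord n s (b + h) \<le> l"
    using below[of "b - h"] below[of "b + h"] h unfolding b_def by simp_all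
  then have "(chord n s (b - h))\<^sup>2 \<le> l\<^sup>2" "(chord n s (b + h))\<^sup>2 \<le> l\<^sup>2"
    by (simp_all add: power_mono chord_nonneg)
  ultimately show False unfolding l_def by simp
qed

lemma chord_cyclic_below_rn:
  assumes n: "n \<ge> 4" and r: "0 < r" "r < rn n"
  shows "chord_cyclic n r"
proof -
  define S where "S = {r. r \<ge> 0 \<and> (\<forall>r'. 0 < r' \<and> r' < r \<longrightarrow> vr_cyclic n r')}"
  define s :: real where "s = 1 / (4 * real n) - 1 / 2"
  have quarter: "real n * (s + 1 / 2) = 1 / 4" unfolding s_def using n by simp
  have s: "real n * (s + 1 / 2) \<notin> \<int>" unfolding quarter using not_Ints_between[of 0 "1 / 4"] by simp
  have "x \<le> chord n s (s + 1 / 2)" if "x \<in> S" for x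
    using antipodal_chord_ge_cyclic_bound[OF n _ s] vr_cyclic_imp_chord_cyclic[OF n] that
    unfolding S_def by blast
  then have "bdd_above S" by (rule bdd_aboveI)
  moreover have "0 \<in> S" unfolding S_def by auto
  ultimately obtain x where "x \<in> S" "r < x"
    using r(2) less_cSup_iff[of S r] unfolding rn_def S_def[symmetric] by blast
  then show ?thesis using r(1) vr_cyclic_imp_chord_cyclic[OF n] unfolding S_def by blast
qed

lemma rn_le_antipodal_chord:
  assumes n: "n \<ge> 4"
  shows "rn n \<le> chord n s (s + 1 / 2)"
proof -
  have n0: "n > 0" using n by simp
  have off_grid: "rn n \<le> chord n t (t + 1 / 2)" if "real n * (t + 1 / 2) \<notin> \<int>" for t
    using n chord_cyclic_below_rn[OF n] that by (rule antipodal_chord_ge_cyclic_bound)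
  show ?thesis
  proof (cases "real n * (s + 1 / 2) \<in> \<int>")
    case True
    then obtain k where k: "real n * (s + 1 / 2) = real_of_int k" by (elim Ints_cases)
    define f where "f h = chord n (s + h) (s + 1 / 2 + h)" for h
    have "continuous_on UNIV f" unfolding f_def by (intro continuous_intros n0)
    then have "(f \<longlongrightarrow> f 0) (at_right 0)"
      by (metis continuous_on_eq_continuous_at continuous_at_imp_continuous_within continuous_within
          open_UNIV UNIV_I)
    moreover have "eventually (\<lambda>h. rn n \<le> f h) (at_right 0)"
    proof -
      have "rn n \<le> f h" if "0 < h" "h < 1 / real n" for h
      proof -
        have "real n * (s + h + 1 / 2) = real_of_int k + real n * h"
          using k by (simp add: algebra_simps)
        moreover have "0 < real n * h" "real n * h < 1" using that n0 by (auto simp: field_simps)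
        ultimately have "real n * (s + h + 1 / 2) \<notin> \<int>" using not_Ints_between[of k] by simp
        then have "rn n \<le> chord n (s + h) (s + h + 1 / 2)" by (rule off_grid)
        then show ?thesis unfolding f_def by (simp add: ac_simps)
      qed
      moreover have "eventually (\<lambda>h. 0 < h \<and> h < 1 / real n) (at_right (0::real))"
        using eventually_at_right_real[of 0 "1 / real n"] n0 by simp
      ultimately show ?thesis by (auto elim: eventually_mono)
    qed
    ultimately show ?thesis unfolding f_def by (intro tendsto_lowerbound) auto
  qed (rule off_grid)
qed

section \<open>The lift of \<open>g\<close>\<close>

lemma tendsto_chord_at_left:
  assumes "n > 0"
  shows "((\<lambda>t. chord n x t) \<longlongrightarrow> chord n x b) (at_left b)"
proof -
  have "continuous_on UNIV (\<lambda>t. chord n x t)" by (intro continuous_intros assms)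
  then show ?thesis
    by (metis continuous_on_eq_continuous_at continuous_at_imp_continuous_within continuous_within
        open_UNIV UNIV_I)
qed

lemma chord_le_of_nested:
  assumes n: "n \<ge> 4" and ab: "b \<le> a + 1 / 2" "chord n a b < rn n"
    and cd: "a \<le> c" "c < d" "d \<le> b"
  shows "chord n c d \<le> chord n a b"
proof (rule dense_ge_bounded[OF ab(2)])
  fix r assume r: "chord n a b < r" "r < rn n"
  then have cyc: "chord_cyclic n r" using chord_cyclic_below_rn[OF n] chord_nonneg[of n a b] by simp
  have cb: "chord n c b < r"
  proof (cases "c = a")
    case False
    then show ?thesis using chord_cyclicD(2)[OF cyc _ _ ab(1) r(1), of c] cd by simp
  qed (use r in simp)
  show "chord n c d \<le> r"
  proof (cases "d = b")
    case False
    then show ?thesis using chord_cyclicD(1)[OF cyc _ _ _ cb, of d] cd ab(1) by simp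
  qed (use cb in simp)
qed

definition g_gap :: "nat \<Rightarrow> real \<Rightarrow> real \<Rightarrow> real" where
  "g_gap n r s = Inf {t. 0 < t \<and> t < 1 \<and> chord n s (s + t) = r}"

definition g_lift :: "nat \<Rightarrow> real \<Rightarrow> real \<Rightarrow> real" where
  "g_lift n r s = s + g_gap n r s"

lemma g_gap_eqI:
  assumes "0 < t" "t < 1" "chord n s (s + t) = r" "\<And>t'. 0 < t' \<Longrightarrow> t' < t \<Longrightarrow> chord n s (s + t') \<noteq> r"
  shows "g_gap n r s = t"
  unfolding g_gap_def
proof (rule cInf_eq_minimum)
  show "t \<in> {t. 0 < t \<and> t < 1 \<and> chord n s (s + t) = r}" using assms by simp
  fix x assume "x \<in> {t. 0 < t \<and> t < 1 \<and> chord n s (s + t) = r}"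
  then show "t \<le> x" using assms(4)[of x] by force
qed

lemma g_gap_first_hit:
  assumes n: "n \<ge> 4" and r: "0 < r" "r \<le> rn n"
  shows "0 < g_gap n r s" "g_gap n r s \<le> 1 / 2" "chord n s (s + g_gap n r s) = r"
    "\<And>t. 0 < t \<Longrightarrow> t < g_gap n r s \<Longrightarrow> chord n s (s + t) < r"
proof -
  have n0: "n > 0" using n by simp
  have cont: "continuous_on A (\<lambda>t. chord n s (s + t))" for A by (intro continuous_intros n0)
  define B where "B = {0..1 / 2} \<inter> {t. r \<le> chord n s (s + t)}"
  have "closed B" unfolding B_def
    by (intro closed_Int closed_atLeastAtMost closed_Collect_le cont continuous_on_const)
  moreover have "1 / 2 \<in> B" unfolding B_def using rn_le_antipodal_chord[OF n, of s] r by simp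
  moreover have bdd: "bdd_below B" unfolding B_def by (rule bdd_belowI[of _ 0]) auto
  ultimately have "Inf B \<in> B" by (intro closed_contains_Inf) auto
  define t0 where "t0 = Inf B"
  have t0: "0 \<le> t0" "t0 \<le> 1 / 2" "r \<le> chord n s (s + t0)"
    using \<open>Inf B \<in> B\<close> unfolding B_def t0_def by auto
  have below: "chord n s (s + t) < r" if "0 \<le> t" "t < t0" for t
  proof (rule ccontr)
    assume "\<not> ?thesis"
    then have "t \<in> B" unfolding B_def using that t0 by auto
    then show False using cInf_lower[OF _ bdd, of t] that unfolding t0_def by simp
  qed
  have "t0 \<noteq> 0" using t0 r by auto
  then have "0 < t0" using t0 by simp
  obtain x where x: "0 \<le> x" "x \<le> t0" "chord n s (s + x) = r"
    using IVT'[of "\<lambda>t. chord n s (s + t)" 0 r t0] t0 r cont by auto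
  then have "x = t0" using below[of x] by force
  then have "chord n s (s + t0) = r" using x by simp
  then have "g_gap n r s = t0"
    by (intro g_gap_eqI) (use \<open>0 < t0\<close> t0 below in \<open>auto simp: less_imp_neq\<close>)
  then show "0 < g_gap n r s" "g_gap n r s \<le> 1 / 2" "chord n s (s + g_gap n r s) = r"
    "\<And>t. 0 < t \<Longrightarrow> t < g_gap n r s \<Longrightarrow> chord n s (s + t) < r"
    using \<open>0 < t0\<close> t0 \<open>chord n s (s + t0) = r\<close> below by auto
qed

lemma chord_g_lift_antitone:
  assumes n: "n \<ge> 4" and r: "0 < r" "r \<le> rn n" and x: "s \<le> x1" "x1 < x2" "x2 < g_lift n r s"
  shows "chord n x2 (g_lift n r s) \<le> chord n x1 (g_lift n r s)"
proof (rule tendsto_le[OF _ tendsto_chord_at_left tendsto_chord_at_left])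
  define b where "b = g_lift n r s"
  have half: "b \<le> s + 1 / 2"
    using g_gap_first_hit(2)[OF n r, of s] unfolding b_def g_lift_def by simp
  have "chord n x2 t \<le> chord n x1 t" if t: "x2 < t" "t < b" for t
  proof -
    have "chord n s t < r"
      using g_gap_first_hit(4)[OF n r, where s=s and t="t - s"] t x unfolding b_def g_lift_def
      by simp
    moreover have "chord n x1 t \<le> chord n s t"
      by (rule chord_le_of_nested[OF n]) (use t half x r \<open>chord n s t < r\<close> in auto)
    ultimately show ?thesis
      by (intro chord_le_of_nested[OF n]) (use t half x r in auto)
  qed
  moreover have "eventually (\<lambda>t. x2 < t \<and> t < b) (at_left b)"
    using eventually_at_left_real[of x2 b] x unfolding b_def by simp
  ultimately show "eventually (\<lambda>t. chord n x2 t \<le> chord n x1 t) (at_left (g_lift n r s))"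
    unfolding b_def by (auto elim: eventually_mono)
qed (use n in simp_all)

text \<open>Only chords ending at \<open>b = g_lift n r s\<close> need care: nesting makes \<open>chord n x b\<close> non-increasing
  in \<open>x \<in> [s, c]\<close>, so equality at \<open>c\<close> would make it constant there, contradicting strict convexity
  along an edge.\<close>

lemma chord_lt_within_g_gap:
  assumes n: "n \<ge> 4" and r: "0 < r" "r \<le> rn n"
    and cd: "s \<le> c" "c < d" "d \<le> g_lift n r s" and proper: "\<not> (c = s \<and> d = g_lift n r s)"
  shows "chord n c d < r"
proof -
  define b where "b = g_lift n r s"
  have half: "b \<le> s + 1 / 2" and chord_b: "chord n s b = r"
    using g_gap_first_hit[OF n r, of s] unfolding b_def g_lift_def by auto
  have before_b: "chord n s t < r" if "s < t" "t < b" for t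
    using g_gap_first_hit(4)[OF n r, where s=s and t="t - s"] that unfolding b_def g_lift_def
    by simp
  show ?thesis
  proof (cases "d < b")
    case True
    then have "chord n s d < r" using before_b[of d] cd by simp
    moreover have "chord n c d \<le> chord n s d"
      using chord_le_of_nested[OF n _ _ cd(1,2)] half True \<open>chord n s d < r\<close> r by simp
    ultimately show ?thesis by simp
  next
    case False
    then have db: "d = b" and "s < c" using cd proper unfolding b_def by auto
    have antitone: "chord n x2 b \<le> chord n x1 b" if "s \<le> x1" "x1 < x2" "x2 < b" for x1 x2
      using chord_g_lift_antitone[OF n r that[unfolded b_def]] unfolding b_def .
    show ?thesis
    proof (rule ccontr)
      assume "\<not> ?thesis"
      then have "r \<le> chord n c b" using db by simp
      moreover have "chord n x b \<le> r" "chord n c b \<le> chord n x b" if "s \<le> x" "x \<le> c" for x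
        using antitone[of s x] antitone[of x c] that \<open>s < c\<close> cd db chord_b
        by (cases "x = s"; cases "x = c"; simp)+
      ultimately have "cmod (polyP n x - polyP n b) = r" if "s \<le> x" "x \<le> c" for x
        using that unfolding chord_def by force
      then show False using dist_polyP_not_constant[of n s c "polyP n b" r] n \<open>s < c\<close> by auto
    qed
  qed
qed

lemma g_lift_strict_mono:
  assumes n: "n \<ge> 4" and r: "0 < r" "r \<le> rn n" and "s < s'"
  shows "g_lift n r s < g_lift n r s'"
proof (rule ccontr)
  assume "\<not> ?thesis"
  moreover have "s' < g_lift n r s'" using g_gap_first_hit(1)[OF n r, of s']
    unfolding g_lift_def by simp
  ultimately have "chord n s' (g_lift n r s') < r"
    using \<open>s < s'\<close> by (intro chord_lt_within_g_gap[OF n r, of s]) auto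
  then show False using g_gap_first_hit(3)[OF n r, of s'] unfolding g_lift_def by simp
qed

lemma g_lift_rotate:
  assumes "n > 0" "real n * w \<in> \<int>"
  shows "g_lift n r (s + w) = g_lift n r s + w"
proof -
  obtain j where "w = real_of_int j / real n"
    using assms by (metis Ints_cases nonzero_mult_div_cancel_left of_nat_0_less_iff less_irrefl)
  then have "chord n (s + w) (s + w + t) = chord n s (s + t)" for t
    using chord_rotate[OF assms(1), of s j "s + t"] by (simp add: algebra_simps)
  then show ?thesis unfolding g_lift_def g_gap_def by simp
qed

text \<open>The reflection \<open>t \<mapsto> c - t\<close> about a multiple \<open>c\<close> of \<open>1/n\<close> is a symmetry of \<open>P_n\<close> reversing
  the orientation, so it conjugates \<open>g_lift\<close> to its inverse.\<close>

lemma g_lift_reflect: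
  assumes n: "n \<ge> 4" and r: "0 < r" "r \<le> rn n" and c: "real n * c \<in> \<int>"
  shows "g_lift n r (c - g_lift n r s) = c - s"
proof -
  have n0: "n > 0" using n by simp
  obtain j where j: "c = real_of_int j / real n"
    using c n0 by (metis Ints_cases nonzero_mult_div_cancel_left of_nat_0_less_iff less_irrefl)
  define T where "T = g_gap n r s"
  have T: "0 < T" "T \<le> 1 / 2" "chord n s (s + T) = r"
    using g_gap_first_hit[OF n r] unfolding T_def by auto
  have reflect: "chord n (c - (s + T)) (c - x) = chord n (s + T) x" for x
    unfolding j by (rule chord_reflect[OF n0])
  have "g_gap n r (c - (s + T)) = T"
  proof (rule g_gap_eqI)
    show "chord n (c - (s + T)) (c - (s + T) + T) = r"
      using reflect[of s] T(3) chord_commute[of n "s + T" s] by simp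
    fix t assume t: "0 < t" "t < T"
    have "c - (s + T) + t = c - (s + T - t)" by simp
    then have "chord n (c - (s + T)) (c - (s + T) + t) = chord n (s + T - t) (s + T)"
      by (simp only: reflect chord_commute)
    also have "\<dots> < r"
      using t by (intro chord_lt_within_g_gap[OF n r, of s]) (auto simp: T_def g_lift_def)
    finally show "chord n (c - (s + T)) (c - (s + T) + t) \<noteq> r" by simp
  qed (use T in auto)
  then show ?thesis unfolding g_lift_def T_def[symmetric] by simp
qed

lemma g_r_polyP:
  assumes n: "n \<ge> 4"
  shows "g_r n r (polyP n s) = polyP n (g_lift n r s)"
proof -
  have n0: "n > 0" using n by simp
  have frac_shift: "polyP n (frac s + t) = polyP n (s + t)" for t
    using polyP_eq_if_diff_Ints[OF n0, of "frac s + t" "s + t"] by (simp add: frac_def)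
  have "{t. 0 < t \<and> t < 1 \<and> cmod (polyP n s - polyP n (param n (polyP n s) + t)) = r}
      = {t. 0 < t \<and> t < 1 \<and> chord n s (s + t) = r}"
    unfolding param_polyP[OF n] frac_shift chord_def ..
  then show ?thesis unfolding g_r_def param_polyP[OF n] frac_shift g_lift_def g_gap_def by simp
qed

lemma tendsto_g_gap_rn:
  assumes n: "n \<ge> 4" and rn0: "0 < rn n"
  shows "((\<lambda>r. g_gap n r s) \<longlongrightarrow> g_gap n (rn n) s) (at_left (rn n))"
proof -
  have n0: "n > 0" using n by simp
  define T where "T = g_gap n (rn n) s"
  have T: "0 < T" "T \<le> 1 / 2" "chord n s (s + T) = rn n"
    "\<And>t. 0 < t \<Longrightarrow> t < T \<Longrightarrow> chord n s (s + t) < rn n"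
    using g_gap_first_hit[OF n rn0 order.refl] unfolding T_def by blast+
  show ?thesis unfolding T_def[symmetric] tendsto_iff
  proof (intro allI impI)
    fix e :: real assume "e > 0"
    define t where "t = T - min e (T / 2)"
    have t: "0 < t" "t < T" "T - t \<le> e" unfolding t_def using \<open>e > 0\<close> T(1) by auto
    define l where "l = chord n s (s + t)"
    have "max l 0 < rn n" unfolding l_def using T(4)[OF t(1,2)] rn0 by simp
    then have "eventually (\<lambda>r. r \<in> {max l 0<..<rn n}) (at_left (rn n))"
      by (rule eventually_at_left_real)
    moreover have "dist (g_gap n r s) T < e" if "r \<in> {max l 0<..<rn n}" for r
    proof -
      have r: "l < r" "r < rn n" and r': "0 < r" "r \<le> rn n" using that by auto
      define T' where "T' = g_gap n r s"
      have T': "0 < T'" "chord n s (s + T') = r" "\<And>t. 0 < t \<Longrightarrow> t < T' \<Longrightarrow> chord n s (s + t) < r"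
        using g_gap_first_hit[OF n r'] unfolding T'_def by blast+
      have "continuous_on {0..T} (\<lambda>t. chord n s (s + t))" by (intro continuous_intros n0)
      then obtain x where x: "0 \<le> x" "x \<le> T" "chord n s (s + x) = r"
        using IVT'[of "\<lambda>t. chord n s (s + t)" 0 r T] T r r' by auto
      have "x \<noteq> 0" using x r' by auto
      then have "T' \<le> T" using T'(3)[of x] x by force
      moreover have "t < T'"
      proof (rule ccontr)
        assume "\<not> t < T'"
        then have "chord n s (s + T') \<le> l"
          unfolding l_def using T t T'(1) by (intro chord_le_of_nested[OF n]) auto
        then show False using T'(2) r by simp
      qed
      ultimately show ?thesis unfolding T'_def[symmetric] dist_real_def using t by auto
    qed
    ultimately show "eventually (\<lambda>r. dist (g_gap n r s) T < e) (at_left (rn n))"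
      by (auto elim: eventually_mono)
  qed
qed

lemma g_polyP:
  assumes n: "n \<ge> 4" and r: "0 < r" "r \<le> rn n"
  shows "g n r (polyP n s) = polyP n (g_lift n r s)"
proof (cases "r < rn n")
  case True
  then show ?thesis unfolding g_def using g_r_polyP[OF n] by simp
next
  case False
  then have r: "r = rn n" "0 < rn n" using r by auto
  have n0: "n > 0" using n by simp
  have "((\<lambda>r'. s + g_gap n r' s) \<longlongrightarrow> g_lift n (rn n) s) (at_left (rn n))"
    unfolding g_lift_def by (intro tendsto_intros tendsto_g_gap_rn[OF n r(2)])
  then have "((\<lambda>r'. polyP n (s + g_gap n r' s)) \<longlongrightarrow> polyP n (g_lift n (rn n) s)) (at_left (rn n))"
    by (rule isCont_tendsto_compose[rotated])
      (use continuous_polyP[OF n0] in \<open>simp add: continuous_on_eq_continuous_at\<close>)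
  then have "Lim (at_left (rn n)) (\<lambda>r'. g_r n r' (polyP n s)) = polyP n (g_lift n (rn n) s)"
    unfolding g_r_polyP[OF n] g_lift_def by (intro tendsto_Lim) simp_all
  then show ?thesis unfolding g_def r by simp
qed

lemma equilateral_star_orbit:
  assumes n: "n \<ge> 4" and star: "equilateral_star n l r u"
  obtains s where "\<And>i. i < 2 * l + 1 \<Longrightarrow> u i = polyP n ((g_lift n r ^^ i) s)"
    and "(g_lift n r ^^ (2 * l + 1)) s = s + real l"
proof -
  define q where "q = 2 * l + 1"
  have n0: "n > 0" using n by simp
  have "0 < r \<and> r \<le> rn n \<and> (\<forall>i < q. u i \<in> Pn n) \<and> (\<forall>i < q. u ((i + 1) mod q) = g n r (u i))
      \<and> (\<Sum>i < q. dP n (u i) (u ((i + 1) mod q))) = real l"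
    using star unfolding equilateral_star_def q_def[symmetric] .
  moreover have "0 < q" unfolding q_def by simp
  ultimately have r: "0 < r" "r \<le> rn n" and uP: "u 0 \<in> Pn n"
    and step: "\<And>i. i < q \<Longrightarrow> u ((i + 1) mod q) = g n r (u i)"
    and sum: "(\<Sum>i < q. dP n (u i) (u ((i + 1) mod q))) = real l"
    by blast+
  obtain s where s: "u 0 = polyP n s" using uP Pn_eq_range[OF n0] by auto
  define t where "t i = (g_lift n r ^^ i) s" for i
  have u: "u i = polyP n (t i)" if "i < q" for i
    using that
  proof (induction i)
    case (Suc i)
    then have "u (Suc i) = g n r (u i)" using step[of i] by simp
    then show ?case using Suc g_polyP[OF n r] unfolding t_def by simp
  qed (simp add: s t_def)
  have "dP n (u i) (u ((i + 1) mod q)) = t (Suc i) - t i" if "i < q" for i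
  proof -
    have "u ((i + 1) mod q) = polyP n (t (Suc i))"
      using step[OF that] u[OF that] g_polyP[OF n r] unfolding t_def by simp
    moreover have "t (Suc i) - t i = g_gap n r (t i)" unfolding t_def g_lift_def by simp
    moreover have "0 < g_gap n r (t i)" "g_gap n r (t i) < 1"
      using g_gap_first_hit[OF n r, of "t i"] by auto
    ultimately show ?thesis unfolding u[OF that] by (simp add: dP_polyP[OF n])
  qed
  then have "(\<Sum>i < q. t (Suc i) - t i) = real l" using sum by simp
  moreover have "(\<Sum>i < q. t (Suc i) - t i) = t q - t 0" by (rule sum_lessThan_telescope)
  ultimately have "t q = s + real l" unfolding t_def by simp
  then show ?thesis using that[of s] u unfolding q_def t_def by blast
qed

section \<open>Counting grid points on orbits of increasing dihedral lifts\<close>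

lemma periodic_point_of_strict_mono_is_fixed:
  fixes G :: "'a::linorder \<Rightarrow> 'a"
  assumes mono: "\<And>x y. x < y \<Longrightarrow> G x < G y" and per: "(G ^^ d) x = x" and "d > 0"
  shows "G x = x"
proof -
  have up: "x < (G ^^ Suc m) x" if "x < G x" for m
  proof (induction m)
    case (Suc m)
    then show ?case using less_trans[OF that mono[OF Suc]] by simp
  qed (use that in simp)
  have down: "(G ^^ Suc m) x < x" if "G x < x" for m
  proof (induction m)
    case (Suc m)
    then show ?case using less_trans[OF mono[OF Suc] that] by simp
  qed (use that in simp)
  obtain m where "d = Suc m" using \<open>d > 0\<close> gr0_implies_Suc by blast
  then show ?thesis using up[of m] down[of m] per by (metis less_irrefl neqE)
qed

lemma of_nat_gcd_mult_in_Ints: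
  assumes "real a * D \<in> \<int>" "real b * D \<in> \<int>"
  shows "real (gcd a b) * D \<in> \<int>"
proof -
  obtain u v where "u * int a + v * int b = int (gcd a b)"
    using bezout_int[of "int a" "int b"] by (auto simp: gcd_int_int_eq)
  then have "real (gcd a b) * D = real_of_int u * (real a * D) + real_of_int v * (real b * D)"
    by (metis (mono_tags, opaque_lifting) distrib_right mult.assoc of_int_add of_int_mult
        of_int_of_nat_eq)
  then show ?thesis using assms by simp
qed

lemma exists_inverse_mod:
  assumes "coprime l d" "d > 0"
  obtains e :: nat and \<beta> :: int where "int e * int l = 1 + int d * \<beta>"
proof -
  obtain u v where uv: "u * int l + v * int d = 1"
    using assms bezout_int[of "int l" "int d"] by (auto simp: gcd_int_int_eq coprime_iff_gcd_eq_1)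
  define e where "e = nat (u mod int d)"
  have "int e = u mod int d" unfolding e_def using assms(2) by simp
  also have "\<dots> = u - int d * (u div int d)" by (metis minus_div_mult_eq_mod mult.commute)
  finally have e: "int e = u - int d * (u div int d)" .
  have "int e * int l = u * int l - int d * (u div int d) * int l"
    unfolding e by (simp add: algebra_simps)
  also have "u * int l = 1 - v * int d" using uv by simp
  finally have "int e * int l = 1 + int d * (- v - u div int d * int l)"
    by (simp add: algebra_simps)
  then show ?thesis by (rule that)
qed

locale dihedral_lift =
  fixes F :: "real \<Rightarrow> real" and n :: nat
  assumes n_pos: "n > 0"
    and strict_mono: "x < y \<Longrightarrow> F x < F y"
    and translate: "real n * w \<in> \<int> \<Longrightarrow> F (x + w) = F x + w"
    and reflect: "real n * c \<in> \<int> \<Longrightarrow> F (c - F x) = c - x"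
begin

lemma funpow_translate: "real n * w \<in> \<int> \<Longrightarrow> (F ^^ k) (x + w) = (F ^^ k) x + w"
  by (induction k) (auto simp: translate)

lemma funpow_add_of_int: "(F ^^ k) (x + real_of_int m) = (F ^^ k) x + real_of_int m"
  by (rule funpow_translate) simp

lemma funpow_strict_mono: "x < y \<Longrightarrow> (F ^^ k) x < (F ^^ k) y"
  by (induction k) (auto intro: strict_mono)

lemma funpow_reflect: "real n * c \<in> \<int> \<Longrightarrow> (F ^^ k) (c - (F ^^ k) x) = c - x"
proof (induction k)
  case (Suc k)
  have "(F ^^ Suc k) z = (F ^^ k) (F z)" for z by (simp only: funpow_Suc_right comp_def)
  then have "(F ^^ Suc k) (c - (F ^^ Suc k) x) = (F ^^ k) (F (c - F ((F ^^ k) x)))" by simp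
  also have "F (c - F ((F ^^ k) x)) = c - (F ^^ k) x" using Suc.prems by (rule reflect)
  finally show ?case using Suc by simp
qed simp

lemma funpow_period_mult:
  assumes "(F ^^ q) x = x + real l"
  shows "(F ^^ (q * m)) x = x + real (m * l)"
proof (induction m)
  case (Suc m)
  have "(F ^^ (q * Suc m)) x = (F ^^ q) ((F ^^ (q * m)) x)" by (simp add: funpow_add)
  also have "\<dots> = x + real l + real (m * l)"
    using Suc assms funpow_add_of_int[of q x "int (m * l)"] by simp
  finally show ?case by simp
qed simp

lemma funpow_period:
  assumes "(F ^^ q) x = x + real l"
  shows "(F ^^ N) x = (F ^^ (N mod q)) x + real (N div q * l)"
proof -
  have "(F ^^ N) x = (F ^^ (N mod q)) ((F ^^ (q * (N div q))) x)"
    by (metis funpow_add comp_apply mod_mult_div_eq)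
  then show ?thesis
    using funpow_period_mult[OF assms] funpow_add_of_int[of "N mod q" x "int (N div q * l)"] by simp
qed

text \<open>Reflecting in \<open>y\<close> conjugates \<open>F^k\<close> to its inverse, so \<open>F^(2k)\<close> moves \<open>x\<close> by \<open>2 (y - x)\<close> modulo
  integers; comparing \<open>q\<close> such steps with the period gives the claim.\<close>

lemma period_mult_diff_in_Ints:
  assumes per: "(F ^^ q) x = x + real l"
    and xy: "(F ^^ k) x = y + real_of_int \<beta>"
    and y: "real n * (2 * y) \<in> \<int>" and x: "real n * (2 * x) \<in> \<int>"
  shows "real q * (y - x) \<in> \<int>"
proof -
  have reflected: "(F ^^ k) y = 2 * y - x + real_of_int \<beta>"
  proof -
    have "(F ^^ k) (2 * y - (F ^^ k) x) = 2 * y - x" by (rule funpow_reflect[OF y])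
    moreover have "2 * y - (F ^^ k) x = y + real_of_int (- \<beta>)" using xy by simp
    ultimately show ?thesis using funpow_add_of_int[of k y "- \<beta>"] by simp
  qed
  have twice: "(F ^^ (2 * k * m)) x = x + 2 * real m * (y - x) + real_of_int (2 * int m * \<beta>)" for m
  proof (induction m)
    case (Suc m)
    have grid: "real n * (2 * real m * (y - x)) \<in> \<int>"
      using Ints_mult[OF Ints_of_nat[of m] Ints_diff[OF y x]] by (simp add: algebra_simps)
    have "2 * k * Suc m = k + (k + 2 * k * m)" by simp
    then have "(F ^^ (2 * k * Suc m)) x = (F ^^ k) ((F ^^ k) ((F ^^ (2 * k * m)) x))"
      by (simp only: funpow_add comp_def)
    also have "\<dots> = (F ^^ k) ((F ^^ k) x) + 2 * real m * (y - x) + real_of_int (2 * int m * \<beta>)"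
      unfolding Suc funpow_add_of_int funpow_translate[OF grid] ..
    finally show ?case unfolding xy funpow_add_of_int reflected by (simp add: algebra_simps)
  qed simp
  have "(F ^^ (2 * k * q)) x = x + real (2 * k * l)"
    using funpow_period_mult[OF per, of "2 * k"] by (simp add: ac_simps)
  then have "real q * (y - x) = real_of_int (int k * int l - int q * \<beta>)"
    using twice[of q] by (simp add: algebra_simps)
  then show ?thesis by simp
qed

text \<open>For \<open>e l = 1\<close> modulo \<open>d\<close> and \<open>k = (q/d) e\<close>, the map \<open>F^k\<close> shifted back by an integer and
  by \<open>1/d\<close> is increasing and has \<open>x\<close> as a periodic point of period \<open>d\<close>, hence fixes \<open>x\<close>.\<close>

lemma funpow_orbit_translates:
  assumes per: "(F ^^ q) x = x + real l" and cop: "coprime l q" and d: "d dvd q" "d dvd n" "d > 0"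
  obtains k \<beta> where "\<And>c. (F ^^ (k * c)) x = x + real c / real d + real c * real_of_int \<beta>"
proof -
  obtain q' where q': "q = d * q'" using d(1) by blast
  then have "coprime l d" using cop by simp
  then obtain e \<beta> where "int e * int l = 1 + int d * \<beta>" using d(3) by (rule exists_inverse_mod)
  then have el: "real e * real l = 1 + real d * real_of_int \<beta>"
    by (metis of_int_of_nat_eq of_int_mult of_int_add of_int_1)
  define k where "k = q' * e"
  define G where "G z = (F ^^ k) z - real_of_int \<beta> - 1 / real d" for z
  have G: "G z = (F ^^ k) z - real_of_int \<beta> - 1 / real d" for z unfolding G_def ..
  have grid: "real n * (real_of_int i + real c / real d) \<in> \<int>" for i c
  proof -
    obtain m where "n = d * m" using d(2) by blast
    then have "real n * (real_of_int i + real c / real d) = real_of_int (int n * i + int (c * m))"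
      using d(3) by (simp add: field_simps)
    then show ?thesis by simp
  qed
  have G_iter: "(G ^^ c) x = (F ^^ (k * c)) x - real c * real_of_int \<beta> - real c / real d" for c
  proof (induction c)
    case (Suc c)
    have "(F ^^ (k * Suc c)) x = (F ^^ k) ((F ^^ (k * c)) x)" by (simp add: funpow_add)
    also have "(F ^^ (k * c)) x = (G ^^ c) x + (real_of_int (int c * \<beta>) + real c / real d)"
      using Suc by simp
    also have "(F ^^ k) \<dots> = (F ^^ k) ((G ^^ c) x) + (real_of_int (int c * \<beta>) + real c / real d)"
      by (rule funpow_translate[OF grid])
    also have "(F ^^ k) ((G ^^ c) x) = (G ^^ Suc c) x + real_of_int \<beta> + 1 / real d"
      using G[of "(G ^^ c) x"] by simp
    finally show ?case by (simp add: algebra_simps add_divide_distrib)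
  qed simp
  have kd: "k * d = q * e" unfolding k_def q' by simp
  have "(G ^^ d) x = x"
    unfolding G_iter kd funpow_period_mult[OF per] using el d(3) by (simp add: field_simps)
  moreover have "G y < G z" if "y < z" for y z using funpow_strict_mono[OF that] unfolding G by simp
  ultimately have "G x = x" using periodic_point_of_strict_mono_is_fixed[of G d x] d(3) by blast
  then have "(G ^^ c) x = x" for c by (induction c) auto
  then show ?thesis using that[of k \<beta>] unfolding G_iter by (simp add: algebra_simps)
qed

lemma funpow_period_shift:
  assumes "(F ^^ q) x = x + real l"
  shows "(F ^^ q) ((F ^^ a) x) = (F ^^ a) x + real l"
proof -
  have "(F ^^ q) ((F ^^ a) x) = (F ^^ a) ((F ^^ q) x)" by (metis funpow_add add.commute comp_apply)
  then show ?thesis using assms funpow_add_of_int[of a x "int l"] by simp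
qed

lemma half_grid_orbit_point_in_coset:
  assumes per: "(F ^^ q) y = y + real l" and q: "odd q" and y: "real (2 * n) * y \<in> \<int>"
    and x: "(F ^^ k) y = x + real_of_int \<beta>" "real (2 * n) * x \<in> \<int>"
  shows "\<exists>c<gcd n q. x - (y + real c / real (gcd n q)) \<in> \<int>"
proof -
  define d where "d = gcd n q"
  have "d > 0" unfolding d_def using n_pos by simp
  have "real q * (x - y) \<in> \<int>"
    using period_mult_diff_in_Ints[OF per x(1)] x(2) y by (simp add: ac_simps)
  moreover have "real (2 * n) * (x - y) \<in> \<int>" using x(2) y by (simp add: right_diff_distrib)
  ultimately have "real (gcd q (2 * n)) * (x - y) \<in> \<int>" by (rule of_nat_gcd_mult_in_Ints)
  moreover have "gcd q (2 * n) = d"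
    unfolding d_def using q by (simp add: gcd_mult_right_left_cancel gcd.commute)
  ultimately obtain m where "real d * (x - y) = real_of_int m" by (auto elim: Ints_cases)
  then have m: "x - y = real_of_int m / real d" using \<open>d > 0\<close> by (simp add: field_simps)
  define c where "c = nat (m mod int d)"
  have "m = int d * (m div int d) + int c" unfolding c_def using \<open>d > 0\<close> by simp
  then have "real_of_int m = real d * real_of_int (m div int d) + real c"
    by (metis of_int_add of_int_mult of_int_of_nat_eq)
  then have "x - (y + real c / real d) = real_of_int (m div int d)"
    using m \<open>d > 0\<close> by (simp add: field_simps)
  moreover have "c < d" unfolding c_def using \<open>d > 0\<close> by (simp add: nat_less_iff)
  ultimately show ?thesis unfolding d_def by (metis Ints_of_int)
qed

lemma half_grid_coset_point_in_orbit:
  assumes per: "(F ^^ q) y = y + real l" and cop: "coprime l q" and "q > 0"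
    and y: "real (2 * n) * y \<in> \<int>" and c: "c < gcd n q"
  shows "\<exists>k. (F ^^ k) y - (y + real c / real (gcd n q)) \<in> \<int>"
    and "real (2 * n) * (y + real c / real (gcd n q)) \<in> \<int>"
proof -
  define d where "d = gcd n q"
  have d: "d dvd q" "d dvd n" "d > 0" unfolding d_def using n_pos by auto
  obtain k \<beta> where "\<And>c. (F ^^ (k * c)) y = y + real c / real d + real c * real_of_int \<beta>"
    using funpow_orbit_translates[OF per cop d] by blast
  then have "(F ^^ (k * c)) y - (y + real c / real d) = real_of_int (int c * \<beta>)" by simp
  then show "\<exists>k. (F ^^ k) y - (y + real c / real (gcd n q)) \<in> \<int>" unfolding d_def
    by (metis Ints_of_int)
  obtain e where "n = d * e" using d(2) by blast
  then have "real (2 * n) * (real c / real d) = real (2 * c * e)" using d(3) by simp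
  then show "real (2 * n) * (y + real c / real (gcd n q)) \<in> \<int>"
    using y unfolding d_def by (simp add: distrib_left)
qed

lemma half_grid_orbit_mod_Ints:
  assumes per: "(F ^^ q) x = x + real l" and cop: "coprime l q" and q: "odd q"
    and a: "a < q" "real (2 * n) * (F ^^ a) x \<in> \<int>"
  shows "{w. \<exists>i<q. real (2 * n) * (F ^^ i) x \<in> \<int> \<and> w - (F ^^ i) x \<in> \<int>}
       = {w. \<exists>c<gcd n q. w - ((F ^^ a) x + real c / real (gcd n q)) \<in> \<int>}"
proof (intro set_eqI iffI CollectI; elim CollectE exE conjE)
  define y where "y = (F ^^ a) x"
  have "q > 0" using q by presburger
  have per_y: "(F ^^ q) y = y + real l" unfolding y_def by (rule funpow_period_shift[OF per])
  fix w i assume i: "i < q" "real (2 * n) * (F ^^ i) x \<in> \<int>" and w: "w - (F ^^ i) x \<in> \<int>"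
  have "(F ^^ (i + q - a)) y = (F ^^ (i + q - a + a)) x" unfolding y_def funpow_add by simp
  also have "i + q - a + a = i + q" using a(1) by simp
  also have "(F ^^ (i + q)) x = (F ^^ i) x + real_of_int (int l)"
    using per funpow_add_of_int[of i x "int l"] by (simp add: funpow_add)
  finally obtain c where "c < gcd n q" "(F ^^ i) x - (y + real c / real (gcd n q)) \<in> \<int>"
    using half_grid_orbit_point_in_coset[OF per_y q a(2)[folded y_def]] i(2) by blast
  then show "\<exists>c<gcd n q. w - ((F ^^ a) x + real c / real (gcd n q)) \<in> \<int>"
    using diff_in_Ints_trans[OF w] unfolding y_def by blast
next
  define y where "y = (F ^^ a) x"
  have "q > 0" using q by presburger
  have per_y: "(F ^^ q) y = y + real l" unfolding y_def by (rule funpow_period_shift[OF per])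
  fix w c assume c: "c < gcd n q" and w: "w - ((F ^^ a) x + real c / real (gcd n q)) \<in> \<int>"
  define z where "z = y + real c / real (gcd n q)"
  obtain k where k: "(F ^^ k) y - z \<in> \<int>" and z: "real (2 * n) * z \<in> \<int>"
    using half_grid_coset_point_in_orbit[OF per_y cop \<open>q > 0\<close> a(2)[folded y_def] c]
    unfolding z_def by blast
  define i where "i = (k + a) mod q"
  have "(F ^^ k) y = (F ^^ i) x + real ((k + a) div q * l)"
    unfolding y_def i_def using funpow_period[OF per, of "k + a"] by (simp add: funpow_add)
  then have i: "(F ^^ i) x - z = ((F ^^ k) y - z) - real ((k + a) div q * l)" by simp
  have close: "(F ^^ i) x - z \<in> \<int>" unfolding i by (intro Ints_diff k Ints_of_nat)
  have "real (2 * n) * (F ^^ i) x = real (2 * n) * z + real (2 * n) * ((F ^^ i) x - z)"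
    by (simp add: algebra_simps)
  then have "real (2 * n) * (F ^^ i) x \<in> \<int>" using z close by simp
  moreover have "w - (F ^^ i) x \<in> \<int>"
    using diff_in_Ints_trans[OF w[folded y_def, folded z_def] diff_in_Ints_commute[OF close]] .
  moreover have "i < q" unfolding i_def using \<open>q > 0\<close> by simp
  ultimately show "\<exists>i<q. real (2 * n) * (F ^^ i) x \<in> \<int> \<and> w - (F ^^ i) x \<in> \<int>" by blast
qed

end

section \<open>Vertices and midpoints on a star\<close>

lemma dihedral_lift_g_lift:
  assumes "n \<ge> 4" "0 < r" "r \<le> rn n"
  shows "dihedral_lift (g_lift n r) n"
  by unfold_locales (use assms g_lift_strict_mono g_lift_rotate g_lift_reflect in auto)

lemma star_points_in_vertices_midpoints:
  assumes n: "n \<ge> 4" and u: "\<And>i. i < q \<Longrightarrow> u i = polyP n (t i)"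
  shows "{u i | i. i < q} \<inter> (vertices n \<union> midpoints n)
       = polyP n ` {w. \<exists>i<q. real (2 * n) * t i \<in> \<int> \<and> w - t i \<in> \<int>}"
proof (intro set_eqI iffI)
  fix z assume "z \<in> {u i | i. i < q} \<inter> (vertices n \<union> midpoints n)"
  then obtain i where i: "i < q" "z = u i" "z \<in> vertices n \<union> midpoints n" by blast
  then have "real (2 * n) * t i \<in> \<int>" using u polyP_in_vertices_midpoints_iff[OF n] by simp
  then show "z \<in> polyP n ` {w. \<exists>i<q. real (2 * n) * t i \<in> \<int> \<and> w - t i \<in> \<int>}"
    using i u by (intro image_eqI[of _ _ "t i"]) auto
next
  fix z assume "z \<in> polyP n ` {w. \<exists>i<q. real (2 * n) * t i \<in> \<int> \<and> w - t i \<in> \<int>}"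
  then obtain w i where z: "z = polyP n w" and i: "i < q" "real (2 * n) * t i \<in> \<int>" "w - t i \<in> \<int>"
    by blast
  then have "z = u i" using u polyP_eq_iff[OF n] by simp
  moreover have "u i \<in> vertices n \<union> midpoints n"
    using u[OF i(1)] i(2) polyP_in_vertices_midpoints_iff[OF n] by simp
  ultimately show "z \<in> {u i | i. i < q} \<inter> (vertices n \<union> midpoints n)" using i(1) by blast
qed

lemma card_polyP_translates_mod_Ints:
  assumes n: "n \<ge> 4" and d: "d > 0"
  shows "card (polyP n ` {w. \<exists>c<d. w - (y + real c / real d) \<in> \<int>}) = d"
proof -
  have "polyP n ` {w. \<exists>c<d. w - (y + real c / real d) \<in> \<int>}
      = (\<lambda>c. polyP n (y + real c / real d)) ` {..<d}"
    using polyP_eq_iff[OF n] by (auto simp: image_iff)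
  moreover have "inj_on (\<lambda>c. polyP n (y + real c / real d)) {..<d}"
  proof (rule inj_onI)
    fix c c' assume "c \<in> {..<d}" "c' \<in> {..<d}"
      and "polyP n (y + real c / real d) = polyP n (y + real c' / real d)"
    then have "(real c - real c') / real d \<in> \<int>"
      using polyP_eq_iff[OF n] by (simp add: diff_divide_distrib)
    then obtain m where m: "(real c - real c') / real d = real_of_int m" by (elim Ints_cases)
    moreover have "- 1 < (real c - real c') / real d" "(real c - real c') / real d < 1"
      using \<open>c \<in> {..<d}\<close> \<open>c' \<in> {..<d}\<close> d by (auto simp: field_simps)
    ultimately have "m = 0" by simp
    then have "(real c - real c') / real d = 0" using m by simp
    then show "c = c'" using d by simp
  qed
  ultimately show ?thesis by (simp add: card_image)
qed

theorem lemma5p13: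
  fixes n l :: nat and r :: real and u :: "nat \<Rightarrow> complex"
  assumes "l \<ge> 1" and "n \<ge> 4 * l + 2"
    and "equilateral_star n l r u"
  shows "card ({u i | i. i < 2*l+1} \<inter> (vertices n \<union> midpoints n)) = 0
       \<or> card ({u i | i. i < 2*l+1} \<inter> (vertices n \<union> midpoints n)) = gcd n (2*l+1)"
proof -
  define q where "q = 2 * l + 1"
  define F where "F = g_lift n r"
  have n: "n \<ge> 4" \<comment> \<open>the only use of the bounds on \<open>l\<close> and \<open>n\<close>\<close>
    using assms(1,2) by simp
  obtain s where u: "\<And>i. i < q \<Longrightarrow> u i = polyP n ((F ^^ i) s)" and per: "(F ^^ q) s = s + real l"
    using equilateral_star_orbit[OF n assms(3)] unfolding q_def F_def by blast
  interpret dihedral_lift F n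
    using assms(3) dihedral_lift_g_lift[OF n] unfolding equilateral_star_def F_def by blast
  define T where "T = {w. \<exists>i<q. real (2 * n) * (F ^^ i) s \<in> \<int> \<and> w - (F ^^ i) s \<in> \<int>}"
  have A: "{u i | i. i < q} \<inter> (vertices n \<union> midpoints n) = polyP n ` T"
    unfolding T_def by (rule star_points_in_vertices_midpoints[OF n u])
  have "card (polyP n ` T) = gcd n q" if "T \<noteq> {}"
  proof -
    obtain a where "a < q" "real (2 * n) * (F ^^ a) s \<in> \<int>" using \<open>T \<noteq> {}\<close> unfolding T_def by blast
    moreover have "coprime l q"
      unfolding q_def coprime_iff_gcd_eq_1 using gcd_add_mult[of l 2 1] by simp
    moreover have "odd q" unfolding q_def by simp
    ultimately have "T = {w. \<exists>c<gcd n q. w - ((F ^^ a) s + real c / real (gcd n q)) \<in> \<int>}"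
      unfolding T_def using half_grid_orbit_mod_Ints[OF per] by blast
    then show ?thesis using card_polyP_translates_mod_Ints[OF n] n by simp
  qed
  then show ?thesis unfolding A[unfolded q_def] q_def by (cases "T = {}") auto
qed
end
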